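(* Let $G$ be a finite connected interval graph that is balanced and $p$-critical (for some $p\ge 1$), and let $z$ be a vertex of maximum weight in $G$. If $C$ is an exterior local component at $z$, then $C$ consists of exactly two vertices.
   Context: An interval graph is a finite simple graph whose vertices can be assigned (closed, bounded) real intervals $I_v$ so that $v,w$ are adjacent iff $I_v\cap I_w\ne\emptyset$. For such a representation $\alpha$, $\mathrm{imp}_\alpha(z)$ is the number of intervals $I_w$, $w\ne z$, with $I_w\subseteq I_z$; $\mathrm{imp}(\alpha)=\max_z\mathrm{imp}_\alpha(z)$; and the impropriety $\mathrm{imp}(G)$ is the minimum of $\mathrm{imp}(\alpha)$ over all representations. A local component at $z$ is a connected component of $G\setminus\{z\}$; it is exterior iff it contains a vertex not adjacent to $z$. If $z$ has $n$ local components, $\mathrm{wt}(z)$ is the sum of the $n-2$ smallest orders among the non-exterior local components at $z$ ($0$ if $n\le2$), and $\mathrm{wt}(G)=\max_z \mathrm{wt}(z)$. $G$ is balanced iff $\mathrm{wt}(G)=\mathrm{imp}(G)$. For $p>0$, $G$ is $p$-critical iff $\mathrm{imp}(G)=p$ and every proper induced subgraph of $G$ has impropriety strictly less than $p$. *)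

theory Defs
  imports Complex_Main "HOL-Library.Multiset"
begin

text \<open>A finite simple graph is given by a vertex set V and an adjacency predicate E;
  only pairs of vertices in V are ever consulted, so the induced subgraph on S is (S, E).\<close>

definition simple_graph :: "'a set \<Rightarrow> ('a \<Rightarrow> 'a \<Rightarrow> bool) \<Rightarrow> bool" where
  "simple_graph V E \<longleftrightarrow> finite V \<and> (\<forall>u\<in>V. \<forall>v\<in>V. E u v \<longleftrightarrow> E v u) \<and> (\<forall>v\<in>V. \<not> E v v)"

definition is_interval_rep :: "'a set \<Rightarrow> ('a \<Rightarrow> 'a \<Rightarrow> bool) \<Rightarrow> ('a \<Rightarrow> real set) \<Rightarrow> bool" where
  "is_interval_rep V E I \<longleftrightarrow>
     (\<forall>v\<in>V. \<exists>a b. a \<le> b \<and> I v = {a..b}) \<and>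
     (\<forall>v\<in>V. \<forall>w\<in>V. v \<noteq> w \<longrightarrow> (E v w \<longleftrightarrow> I v \<inter> I w \<noteq> {}))"

definition interval_graph :: "'a set \<Rightarrow> ('a \<Rightarrow> 'a \<Rightarrow> bool) \<Rightarrow> bool" where
  "interval_graph V E \<longleftrightarrow> (\<exists>I. is_interval_rep V E I)"

definition imp_at :: "'a set \<Rightarrow> ('a \<Rightarrow> real set) \<Rightarrow> 'a \<Rightarrow> nat" where
  "imp_at V I z = card {w \<in> V. w \<noteq> z \<and> I w \<subseteq> I z}"

definition imp_rep :: "'a set \<Rightarrow> ('a \<Rightarrow> real set) \<Rightarrow> nat" where
  "imp_rep V I = Max (insert 0 (imp_at V I ` V))"

definition impropriety :: "'a set \<Rightarrow> ('a \<Rightarrow> 'a \<Rightarrow> bool) \<Rightarrow> nat" where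
  "impropriety V E = (LEAST k. \<exists>I. is_interval_rep V E I \<and> imp_rep V I = k)"

definition reach :: "'a set \<Rightarrow> ('a \<Rightarrow> 'a \<Rightarrow> bool) \<Rightarrow> 'a \<Rightarrow> 'a \<Rightarrow> bool" where
  "reach S E = (\<lambda>u v. u \<in> S \<and> v \<in> S \<and> E u v)\<^sup>*\<^sup>*"

definition connected_graph :: "'a set \<Rightarrow> ('a \<Rightarrow> 'a \<Rightarrow> bool) \<Rightarrow> bool" where
  "connected_graph V E \<longleftrightarrow> (\<forall>u\<in>V. \<forall>v\<in>V. reach V E u v)"

definition components :: "'a set \<Rightarrow> ('a \<Rightarrow> 'a \<Rightarrow> bool) \<Rightarrow> 'a set set" where
  "components S E = {{w \<in> S. reach S E v w} | v. v \<in> S}"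

definition local_comps :: "'a set \<Rightarrow> ('a \<Rightarrow> 'a \<Rightarrow> bool) \<Rightarrow> 'a \<Rightarrow> 'a set set" where
  "local_comps V E z = components (V - {z}) E"

definition exterior :: "('a \<Rightarrow> 'a \<Rightarrow> bool) \<Rightarrow> 'a \<Rightarrow> 'a set \<Rightarrow> bool" where
  "exterior E z C \<longleftrightarrow> (\<exists>w\<in>C. \<not> E z w)"

text \<open>wt(z): sum of the n-2 smallest orders among non-exterior local components
  (all of them if there are fewer; 0 if n \<le> 2).\<close>
definition wt_at :: "'a set \<Rightarrow> ('a \<Rightarrow> 'a \<Rightarrow> bool) \<Rightarrow> 'a \<Rightarrow> nat" where
  "wt_at V E z =
     (let LC = local_comps V E z;
          NE = {C \<in> LC. \<not> exterior E z C};
          n = card LC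
      in sum_list (take (n - 2) (sorted_list_of_multiset (image_mset card (mset_set NE)))))"

definition wt :: "'a set \<Rightarrow> ('a \<Rightarrow> 'a \<Rightarrow> bool) \<Rightarrow> nat" where
  "wt V E = Max (insert 0 (wt_at V E ` V))"

definition balanced :: "'a set \<Rightarrow> ('a \<Rightarrow> 'a \<Rightarrow> bool) \<Rightarrow> bool" where
  "balanced V E \<longleftrightarrow> wt V E = impropriety V E"

definition critical :: "nat \<Rightarrow> 'a set \<Rightarrow> ('a \<Rightarrow> 'a \<Rightarrow> bool) \<Rightarrow> bool" where
  "critical p V E \<longleftrightarrow> impropriety V E = p \<and> (\<forall>S. S \<subset> V \<longrightarrow> impropriety S E < p)"

end

theory Submission
  imports Defs
begin

(* Let z have maximum weight, so wt(z) = wt(G) = imp(G) = p, and let C be an exterior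
   local component at z.  C contains a neighbour and a non-neighbour of z, so |C| >= 2.
   If |C| >= 3 we delete a suitable vertex x of C: a non-cut vertex of C whose removal
   still leaves both a neighbour and a non-neighbour of z in C - {x}.  In every interval representation I of G - x the
   local components at z (with C replaced by C - {x}) have connected, pairwise disjoint
   interval unions all meeting I z; at most two of them reach past an endpoint of I z,
   and C - {x} is one of those that do.  The remaining ones, at least n - 2 of them, are
   non-exterior and nested in I z, so wt(z) <= imp_I(z).  Hence wt(z) <= imp(G - x) < p,
   a contradiction. *)


section \<open>Reachability and components\<close>

lemma reach_mono: "S \<subseteq> T \<Longrightarrow> reach S E a b \<Longrightarrow> reach T E a b"
  unfolding reach_def by (erule rtranclp_mono[THEN predicate2D, rotated]) auto

lemma reach_step: "reach S E a b \<Longrightarrow> b \<in> S \<Longrightarrow> c \<in> S \<Longrightarrow> E b c \<Longrightarrow> reach S E a c"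
  unfolding reach_def by (auto intro: rtranclp.rtrancl_into_rtrancl)

lemma reach_trans: "reach S E a b \<Longrightarrow> reach S E b c \<Longrightarrow> reach S E a c"
  unfolding reach_def by auto

lemma reach_leaves:
  assumes "reach S E r y" "r \<in> T" "y \<notin> T"
  shows "\<exists>a b. a \<in> T \<and> b \<notin> T \<and> b \<in> S \<and> E a b"
  using assms unfolding reach_def
proof (induction rule: rtranclp_induct)
  case (step y' y)
  then show ?case by (cases "y' \<in> T") auto
qed simp

lemma comp_nonempty: "D \<in> components S E \<Longrightarrow> D \<noteq> {}"
  unfolding components_def reach_def by auto

lemma comp_subset: "D \<in> components S E \<Longrightarrow> D \<subseteq> S"
  unfolding components_def by auto

lemma finite_local_comps:
  assumes "finite V" shows "finite (local_comps V E z)"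
proof (rule finite_subset[of _ "Pow V"])
  show "local_comps V E z \<subseteq> Pow V"
    unfolding local_comps_def components_def by auto
qed (use assms in simp)

locale sym_adj =
  fixes V :: "'a set" and E :: "'a \<Rightarrow> 'a \<Rightarrow> bool"
  assumes sym: "\<forall>u\<in>V. \<forall>v\<in>V. E u v \<longleftrightarrow> E v u"
begin

lemma reach_sym:
  assumes "S \<subseteq> V" "reach S E a b"
  shows "reach S E b a"
  using assms(2) unfolding reach_def
proof (induction rule: rtranclp_induct)
  case (step y c)
  then have "E c y" using sym assms(1) by blast
  with step show ?case by (auto intro: converse_rtranclp_into_rtranclp)
qed simp

lemma comp_eq:
  assumes "S \<subseteq> V" "D \<in> components S E" "d \<in> D"
  shows "D = {w \<in> S. reach S E d w}"
proof -
  obtain c where c: "c \<in> S" "D = {w \<in> S. reach S E c w}"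
    using assms(2) unfolding components_def by auto
  then have "reach S E c d" "reach S E d c" using assms reach_sym by auto
  then show ?thesis using c by (auto intro: reach_trans)
qed

lemma comp_disjoint:
  assumes "S \<subseteq> V" "D1 \<in> components S E" "D2 \<in> components S E" "x \<in> D1" "x \<in> D2"
  shows "D1 = D2"
  using comp_eq[OF assms(1,2,4)] comp_eq[OF assms(1,3,5)] by simp

text \<open>Deleting one vertex from every component is injective: distinct components are
  disjoint and nonempty, so they cannot both shrink to the same set.\<close>
lemma comp_delete_inj:
  assumes "S \<subseteq> V"
  shows "inj_on (\<lambda>D. D - {x}) (components S E)"
proof (rule inj_onI)
  fix D1 D2 assume D: "D1 \<in> components S E" "D2 \<in> components S E" "D1 - {x} = D2 - {x}"
  show "D1 = D2"
  proof (rule ccontr)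
    assume "D1 \<noteq> D2"
    then have "D1 \<inter> D2 = {}" using comp_disjoint[OF assms D(1,2)] by blast
    then have "D1 \<subseteq> {x}" "D2 \<subseteq> {x}" using D(3) by blast+
    then have "D1 = {x}" "D2 = {x}" using comp_nonempty D(1,2) by blast+
    then show False using \<open>D1 \<noteq> D2\<close> by simp
  qed
qed

lemma comp_no_edge:
  assumes "S \<subseteq> V" "D1 \<in> components S E" "D2 \<in> components S E" "D1 \<noteq> D2"
    "a \<in> D1" "b \<in> D2"
  shows "\<not> E a b"
proof
  assume "E a b"
  have "a \<in> S" "b \<in> S" using comp_subset assms(2,3,5,6) by blast+
  then have "reach S E a b" using \<open>E a b\<close> unfolding reach_def by (intro r_into_rtranclp) simp
  then have "b \<in> D1" using comp_eq[OF assms(1,2,5)] \<open>b \<in> S\<close> by blast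
  then show False using comp_disjoint assms by blast
qed

lemma comp_connected:
  assumes "S \<subseteq> V" "D \<in> components S E" "d \<in> D" "w \<in> D"
  shows "reach D E d w"
proof -
  have D: "D = {w \<in> S. reach S E d w}" using comp_eq assms by blast
  have "reach S E d w" using D assms by auto
  then show ?thesis unfolding reach_def
  proof (induction rule: rtranclp_induct)
    case (step y b)
    then have "y \<in> D" "b \<in> D" using D unfolding reach_def
      by (auto intro: rtranclp.rtrancl_into_rtrancl)
    with step show ?case by (auto intro: rtranclp.rtrancl_into_rtrancl)
  qed simp
qed

lemma comp_has_neighbor:
  assumes conn: "connected_graph V E" and z: "z \<in> V" and D: "D \<in> local_comps V E z"
  shows "\<exists>w\<in>D. E z w"
proof -
  have D': "D \<in> components (V - {z}) E" using D unfolding local_comps_def .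
  obtain d where d: "d \<in> D" using comp_nonempty D' by blast
  have DS: "D \<subseteq> V - {z}" using comp_subset[OF D'] .
  have "reach V E z d" using conn z DS d unfolding connected_graph_def by auto
  then obtain a b where ab: "a \<in> V" "a \<notin> D" "b \<in> D" "E a b"
    using reach_leaves[of V E z d "V - D"] z d DS by auto
  have "a = z"
  proof (rule ccontr)
    assume "a \<noteq> z"
    have "E b a" using ab DS sym by auto
    then have "reach (V - {z}) E b a"
      using ab DS \<open>a \<noteq> z\<close> unfolding reach_def by (intro r_into_rtranclp) auto
    then show False using comp_eq[OF _ D' ab(3)] ab \<open>a \<noteq> z\<close> by auto
  qed
  then show ?thesis using ab by blast
qed

end

lemma simple_graph_sym_adj: "simple_graph V E \<Longrightarrow> sym_adj V E"
  unfolding simple_graph_def sym_adj_def by blast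


section \<open>Non-cut vertices\<close>

text \<open>Every finite connected vertex set with at least two vertices has a vertex other
  than a prescribed root whose deletion keeps it connected: take a maximal connected
  proper subset T containing the root; the unique vertex outside T is the one.\<close>
lemma non_cut_vertex:
  assumes "finite S" "r \<in> S" "card S \<ge> 2" "\<forall>w\<in>S. reach S E r w"
  shows "\<exists>x\<in>S. x \<noteq> r \<and> (\<forall>w\<in>S - {x}. reach (S - {x}) E r w)"
proof -
  define P where "P T \<longleftrightarrow> r \<in> T \<and> T \<subset> S \<and> (\<forall>w\<in>T. reach T E r w)" for T
  have "{r} \<subset> S" using assms(2,3) by (cases "S = {r}") auto
  then have "P {r}" unfolding P_def reach_def by auto
  moreover have "\<forall>T. P T \<longrightarrow> card T < card S + 1"
    using assms(1) unfolding P_def by (auto intro!: card_mono simp: less_Suc_eq_le)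
  ultimately obtain T where T: "P T" "\<And>T'. P T' \<Longrightarrow> card T' \<le> card T"
    using ex_has_greatest_nat[of P "{r}" card] by blast
  have TS: "T \<subset> S" "r \<in> T" "\<forall>w\<in>T. reach T E r w" using T(1) unfolding P_def by auto
  then obtain y where y: "y \<in> S" "y \<notin> T" by blast
  then have "reach S E r y" using assms(4) by blast
  then obtain a b where ab: "a \<in> T" "b \<notin> T" "b \<in> S" "E a b"
    using reach_leaves[OF _ TS(2) y(2)] by blast
  define T' where "T' = insert b T"
  have R': "\<forall>w\<in>T'. reach T' E r w"
  proof
    fix w assume "w \<in> T'"
    have "T \<subseteq> T'" unfolding T'_def by auto
    show "reach T' E r w"
    proof (cases "w = b")
      case True
      have "reach T' E r a" using reach_mono[OF \<open>T \<subseteq> T'\<close>] TS ab by blast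
      then show ?thesis using True reach_step[of T' E r a b] ab unfolding T'_def by auto
    next
      case False
      then show ?thesis using \<open>w \<in> T'\<close> reach_mono[OF \<open>T \<subseteq> T'\<close>] TS unfolding T'_def by auto
    qed
  qed
  have "T' = S"
  proof (rule ccontr)
    assume "T' \<noteq> S"
    then have "P T'" using R' TS ab unfolding P_def T'_def by auto
    then have "card T' \<le> card T" using T by blast
    moreover have "finite T" using TS assms(1) finite_subset by blast
    ultimately show False using ab unfolding T'_def by simp
  qed
  then have "S - {b} = T" using ab unfolding T'_def by auto
  then show ?thesis using ab TS by auto
qed

lemma deletable_vertex:
  assumes "finite C" "\<forall>w\<in>C. reach C E r w" "r \<in> C" "\<not> Q r"
    "t1 \<in> C" "t2 \<in> C" "t1 \<noteq> t2" "Q t1" "Q t2"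
  shows "\<exists>x\<in>C. (\<forall>w\<in>C - {x}. reach (C - {x}) E r w) \<and> r \<in> C - {x} \<and>
           (\<exists>w\<in>C - {x}. Q w)"
proof -
  have "card {t1, t2} \<le> card C" using assms by (intro card_mono) auto
  then have "card C \<ge> 2" using assms(7) by simp
  then obtain x where x: "x \<in> C" "x \<noteq> r" "\<forall>w\<in>C - {x}. reach (C - {x}) E r w"
    using non_cut_vertex[OF assms(1,3) _ assms(2)] by blast
  have "t1 \<in> C - {x} \<or> t2 \<in> C - {x}" using assms(5-7) by blast
  then have "\<exists>w\<in>C - {x}. Q w" using assms(8,9) by blast
  then show ?thesis using x assms(3) by blast
qed

text \<open>In particular, a connected set with at least three vertices containing both a
  neighbour and a non-neighbour of z has a vertex whose deletion keeps it connected and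
  keeps both a neighbour and a non-neighbour of z: one of the two kinds occurs at least
  twice, so root the non-cut argument at a vertex of the other kind.\<close>
lemma deletable_vertex_mixed:
  assumes fin: "finite C" and conn: "\<And>r. r \<in> C \<Longrightarrow> \<forall>v\<in>C. reach C E r v"
    and u: "u \<in> C" "\<not> E z u" and n: "n \<in> C" "E z n" and three: "3 \<le> card C"
  obtains x where "x \<in> C" "\<exists>r\<in>C - {x}. \<forall>v\<in>C - {x}. reach (C - {x}) E r v"
    "\<exists>v\<in>C - {x}. E z v" "\<exists>v\<in>C - {x}. \<not> E z v"
proof -
  have "\<not> C \<subseteq> {u, n}"
  proof
    assume "C \<subseteq> {u, n}"
    then have "card C \<le> card {u, n}" by (intro card_mono) auto
    also have "\<dots> \<le> 2" by (simp add: card_insert_if)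
    finally show False using three by simp
  qed
  then obtain w where w: "w \<in> C" "w \<noteq> u" "w \<noteq> n" by blast
  show ?thesis
  proof (cases "E z w")
    case True
    then show ?thesis
      using deletable_vertex[OF fin conn[OF u(1)] u(1), of "E z" n w] u n w that by blast
  next
    case False
    then show ?thesis
      using deletable_vertex[OF fin conn[OF n(1)] n(1), of "\<lambda>v. \<not> E z v" u w] u n w that
      by blast
  qed
qed


section \<open>Unions of intervals\<close>

text \<open>Let K be the union of all connected subsets of the union that
  contain a point p of I d; along every walk from d each interval joins K.\<close>
lemma connected_Union_intervals:
  fixes I :: "'a \<Rightarrow> real set"
  assumes intv: "\<And>v. v \<in> D \<Longrightarrow> \<exists>a b. a \<le> b \<and> I v = {a..b}"
    and meet: "\<And>v w. v \<in> D \<Longrightarrow> w \<in> D \<Longrightarrow> v \<noteq> w \<Longrightarrow> E v w \<Longrightarrow> I v \<inter> I w \<noteq> {}"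
    and d: "d \<in> D" and R: "\<forall>w\<in>D. reach D E d w"
  shows "connected (\<Union>w\<in>D. I w)"
proof -
  define U where "U = (\<Union>w\<in>D. I w)"
  have conn_I: "connected (I v)" "I v \<noteq> {}" "I v \<subseteq> U" if "v \<in> D" for v
    using intv[OF that] that unfolding U_def by auto
  obtain p where p: "p \<in> I d" using conn_I(2)[OF d] by blast
  define K where "K = \<Union>{T. connected T \<and> p \<in> T \<and> T \<subseteq> U}"
  have K: "connected K" "K \<subseteq> U" unfolding K_def by (auto intro!: connected_Union)
  have pK: "p \<in> K" using p conn_I d unfolding K_def by blast
  have join: "T \<subseteq> K" if "connected T" "T \<subseteq> U" "T \<inter> K \<noteq> {}" for T
  proof -
    have "connected (T \<union> K)" using that K by (intro connected_Un) auto
    then have "T \<union> K \<subseteq> K" using that K pK unfolding K_def by blast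
    then show ?thesis by blast
  qed
  have "I w \<subseteq> K" if "reach D E d w" for w
    using that unfolding reach_def
  proof (induction rule: rtranclp_induct)
    case base
    show ?case using join[OF conn_I(1,3)[OF d]] p pK by blast
  next
    case (step y c)
    then have "y \<in> D" "c \<in> D" "E y c" by auto
    then have "I y \<inter> I c \<noteq> {}" using meet conn_I(2) by (cases "y = c") auto
    then show ?case using join[OF conn_I(1,3)[OF \<open>c \<in> D\<close>]] step.IH by blast
  qed
  then have "U = K" using R K(2) unfolding U_def by blast
  then show ?thesis using K(1) unfolding U_def by simp
qed

lemma connected_escape_endpoint:
  fixes U :: "real set"
  assumes "connected U" "U \<inter> {a..b} \<noteq> {}" "\<not> U \<subseteq> {a..b}"
  shows "a \<in> U \<or> b \<in> U"
proof -
  obtain y where y: "y \<in> U" "a \<le> y" "y \<le> b" using assms(2) by auto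
  obtain x where "x \<in> U" "x \<notin> {a..b}" using assms(3) by blast
  then have x: "x \<in> U" "x < a \<or> b < x" by auto
  show ?thesis
  proof (cases "x < a")
    case True
    then show ?thesis using connectedD_interval[OF assms(1) x(1) y(1)] y by auto
  next
    case False
    then show ?thesis using connectedD_interval[OF assms(1) y(1) x(1)] x y by auto
  qed
qed

text \<open>Hence among pairwise disjoint connected sets meeting [a, b], at most two are not
  contained in [a, b]: one through each endpoint.\<close>
lemma at_most_two_escape:
  fixes U :: "'b \<Rightarrow> real set"
  assumes "finite F" "\<forall>D\<in>F. connected (U D)" "\<forall>D\<in>F. U D \<inter> {a..b} \<noteq> {}"
    "\<forall>D1\<in>F. \<forall>D2\<in>F. D1 \<noteq> D2 \<longrightarrow> U D1 \<inter> U D2 = {}"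
  shows "card {D\<in>F. \<not> U D \<subseteq> {a..b}} \<le> 2"
proof -
  have at_most_one: "card {D\<in>F. c \<in> U D} \<le> 1" for c
  proof -
    have "\<forall>D1\<in>{D\<in>F. c \<in> U D}. \<forall>D2\<in>{D\<in>F. c \<in> U D}. D1 = D2" using assms(4) by blast
    then show ?thesis using assms(1) by (simp add: card_le_Suc0_iff_eq)
  qed
  have "{D\<in>F. \<not> U D \<subseteq> {a..b}} \<subseteq> {D\<in>F. a \<in> U D} \<union> {D\<in>F. b \<in> U D}"
  proof
    fix D assume "D \<in> {D\<in>F. \<not> U D \<subseteq> {a..b}}"
    then show "D \<in> {D\<in>F. a \<in> U D} \<union> {D\<in>F. b \<in> U D}"
      using connected_escape_endpoint[of "U D" a b] assms(2,3) by simp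
  qed
  then have "card {D\<in>F. \<not> U D \<subseteq> {a..b}} \<le> card ({D\<in>F. a \<in> U D} \<union> {D\<in>F. b \<in> U D})"
    using assms(1) by (intro card_mono) auto
  also have "\<dots> \<le> card {D\<in>F. a \<in> U D} + card {D\<in>F. b \<in> U D}" by (rule card_Un_le)
  finally show ?thesis using at_most_one[of a] at_most_one[of b] by simp
qed


section \<open>Sums of the smallest elements of a multiset\<close>

lemma sum_take_Cons_le:
  "\<forall>y\<in>set xs. x \<le> y \<Longrightarrow> sorted xs \<Longrightarrow> k \<le> length xs \<Longrightarrow>
   sum_list (take k (x # xs)) \<le> sum_list (take k (xs :: nat list))"
proof (induction xs arbitrary: x k)
  case (Cons y ys)
  show ?case
  proof (cases k)
    case (Suc k')
    then have "sum_list (take k' (y # ys)) \<le> sum_list (take k' ys)"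
      using Cons by auto
    then show ?thesis using Cons.prems Suc by simp
  qed simp
qed simp

lemma sum_take_insort_le:
  "sorted xs \<Longrightarrow> k \<le> length xs \<Longrightarrow>
   sum_list (take k (insort x xs)) \<le> sum_list (take k (xs :: nat list))"
proof (induction xs arbitrary: k)
  case (Cons y ys)
  show ?case
  proof (cases "x \<le> y")
    case True
    then have "\<forall>w\<in>set (y # ys). x \<le> w" using Cons.prems by auto
    then show ?thesis using True sum_take_Cons_le[of "y # ys" x k] Cons.prems by simp
  next
    case False
    then show ?thesis using Cons by (cases k) auto
  qed
qed simp

lemma sum_smallest_mono:
  "k \<le> size M \<Longrightarrow> sum_list (take k (sorted_list_of_multiset (M + N)))
     \<le> sum_list (take k (sorted_list_of_multiset (M :: nat multiset)))"
proof (induction N)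
  case (add x N)
  have "k \<le> length (sorted_list_of_multiset (M + N))"
    using add.prems by (metis le_add1 order_trans mset_sorted_list_of_multiset size_mset size_union)
  then have "sum_list (take k (insort x (sorted_list_of_multiset (M + N))))
      \<le> sum_list (take k (sorted_list_of_multiset (M + N)))"
    by (intro sum_take_insort_le) auto
  then show ?case using add by simp
qed simp

lemma sum_smallest_le_submultiset:
  assumes "A \<subseteq># M" "k \<le> size A"
  shows "sum_list (take k (sorted_list_of_multiset M)) \<le> sum_mset (A :: nat multiset)"
proof -
  have "sum_list (take k (sorted_list_of_multiset M))
      \<le> sum_list (take k (sorted_list_of_multiset A))"
    using sum_smallest_mono[OF assms(2), of "M - A"] assms(1) by (simp add: subset_mset.add_diff_inverse)
  also have "\<dots> \<le> sum_list (sorted_list_of_multiset A)"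
    by (metis append_take_drop_id sum_list_append le_add1)
  also have "\<dots> = sum_mset A" by (metis mset_sorted_list_of_multiset sum_mset_sum_list)
  finally show ?thesis .
qed

lemma wt_at_le_sum_card:
  assumes "finite (local_comps V E z)"
    and "Fin \<subseteq> {D \<in> local_comps V E z. \<not> exterior E z D}"
    and "card (local_comps V E z) \<le> card Fin + 2"
  shows "wt_at V E z \<le> sum card Fin"
proof -
  define NE where "NE = {D \<in> local_comps V E z. \<not> exterior E z D}"
  have "finite NE" using assms(1) unfolding NE_def by simp
  then have "image_mset card (mset_set Fin) \<subseteq># image_mset card (mset_set NE)"
    using assms(2) unfolding NE_def by (intro image_mset_subseteq_mono subset_imp_msubset_mset_set)
  then have "wt_at V E z \<le> sum_mset (image_mset card (mset_set Fin))"
    unfolding wt_at_def Let_def NE_def[symmetric]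
    using assms(3) by (intro sum_smallest_le_submultiset) auto
  then show ?thesis by (simp add: sum_unfold_sum_mset)
qed


section \<open>Impropriety after deleting a vertex\<close>

lemma impropriety_attained:
  assumes "is_interval_rep V E I0" "H \<subseteq> V"
  obtains I where "is_interval_rep H E I" "imp_rep H I = impropriety H E"
proof -
  have "is_interval_rep H E I0" using assms unfolding is_interval_rep_def by (meson subsetD)
  then have "\<exists>k I. is_interval_rep H E I \<and> imp_rep H I = k" by blast
  then have "\<exists>I. is_interval_rep H E I \<and> imp_rep H I = impropriety H E"
    unfolding impropriety_def by (rule LeastI_ex)
  then show ?thesis using that by blast
qed

lemma imp_at_le_imp_rep: "finite H \<Longrightarrow> z \<in> H \<Longrightarrow> imp_at H I z \<le> imp_rep H I"
  unfolding imp_rep_def by (intro Max_ge) auto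

text \<open>In an interval representation of H all
  but at most two members of F have all their intervals inside I z; those members consist
  of neighbours of z and contribute their total order to imp_I(z).\<close>
lemma nested_members_bound:
  assumes rep: "is_interval_rep H E I" and finH: "finite H" and zH: "z \<in> H"
    and finF: "finite F"
    and sub: "\<And>D. D \<in> F \<Longrightarrow> D \<subseteq> H - {z}"
    and conn: "\<And>D. D \<in> F \<Longrightarrow> \<exists>r\<in>D. \<forall>w\<in>D. reach D E r w"
    and nbr: "\<And>D. D \<in> F \<Longrightarrow> \<exists>w\<in>D. E z w"
    and sep: "\<And>D1 D2 v w. D1 \<in> F \<Longrightarrow> D2 \<in> F \<Longrightarrow> D1 \<noteq> D2 \<Longrightarrow> v \<in> D1 \<Longrightarrow> w \<in> D2
                \<Longrightarrow> v \<noteq> w \<and> \<not> E v w"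
  obtains Fin where "Fin \<subseteq> F" "card F \<le> card Fin + 2" "\<And>D w. D \<in> Fin \<Longrightarrow> w \<in> D \<Longrightarrow> E z w"
    "sum card Fin \<le> imp_at H I z"
proof -
  have intv: "\<And>v. v \<in> H \<Longrightarrow> \<exists>a b. a \<le> b \<and> I v = {a..b}"
    and adj: "\<And>v w. v \<in> H \<Longrightarrow> w \<in> H \<Longrightarrow> v \<noteq> w \<Longrightarrow> E v w \<longleftrightarrow> I v \<inter> I w \<noteq> {}"
    using rep unfolding is_interval_rep_def by auto
  obtain a b where ab: "I z = {a..b}" using intv[OF zH] by blast
  define U where "U D = (\<Union>w\<in>D. I w)" for D
  define Fin where "Fin = {D\<in>F. U D \<subseteq> {a..b}}"
  define Out where "Out = {D\<in>F. \<not> U D \<subseteq> {a..b}}"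
  have nonempty: "I v \<noteq> {}" if "v \<in> H" for v using intv[OF that] by auto
  have "connected (U D)" if D: "D \<in> F" for D
  proof -
    obtain r where r: "r \<in> D" "\<forall>w\<in>D. reach D E r w" using conn[OF D] by blast
    have "\<exists>a b. a \<le> b \<and> I v = {a..b}" if "v \<in> D" for v
      using intv sub[OF D] that by blast
    moreover have "I v \<inter> I w \<noteq> {}" if "v \<in> D" "w \<in> D" "v \<noteq> w" "E v w" for v w
      using adj[of v w] sub[OF D] that by auto
    ultimately show ?thesis unfolding U_def using r by (rule connected_Union_intervals)
  qed
  moreover have "U D \<inter> {a..b} \<noteq> {}" if D: "D \<in> F" for D
  proof -
    obtain w where w: "w \<in> D" "E z w" using nbr[OF D] by blast
    then have "I z \<inter> I w \<noteq> {}" using adj[OF zH, of w] sub[OF D] by auto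
    then show ?thesis using w(1) ab unfolding U_def by blast
  qed
  moreover have "U D1 \<inter> U D2 = {}" if D12: "D1 \<in> F" "D2 \<in> F" "D1 \<noteq> D2" for D1 D2
  proof -
    have "I v \<inter> I w = {}" if "v \<in> D1" "w \<in> D2" for v w
      using sep[OF D12 that] adj[of v w] sub D12 that by blast
    then show ?thesis unfolding U_def by blast
  qed
  ultimately have "card Out \<le> 2"
    unfolding Out_def by (intro at_most_two_escape[OF finF]) blast+
  moreover have "F = Fin \<union> Out" unfolding Fin_def Out_def by auto
  then have "card F \<le> card Fin + card Out" by (metis card_Un_le)
  ultimately have card_Fin: "card F \<le> card Fin + 2" by linarith
  have nested: "w \<in> H - {z} \<and> I w \<subseteq> I z" if "D \<in> Fin" "w \<in> D" for D w
    using that sub ab unfolding Fin_def U_def by blast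
  have nbr_Fin: "E z w" if "D \<in> Fin" "w \<in> D" for D w
    using nested[OF that] adj[OF zH, of w] nonempty[of w] by auto
  have "sum card Fin = card (\<Union>Fin)"
  proof (rule card_Union_disjoint[symmetric])
    show "pairwise disjnt Fin"
      using sep unfolding pairwise_def disjnt_def Fin_def by blast
    show "finite D" if "D \<in> Fin" for D
      using that sub finH finite_subset unfolding Fin_def by blast
  qed
  also have "\<dots> \<le> imp_at H I z"
    unfolding imp_at_def using finH nested by (intro card_mono) auto
  finally have "sum card Fin \<le> imp_at H I z" .
  moreover have "Fin \<subseteq> F" unfolding Fin_def by blast
  ultimately show ?thesis using that card_Fin nbr_Fin by blast
qed

definition reduced_comps :: "'a set \<Rightarrow> ('a \<Rightarrow> 'a \<Rightarrow> bool) \<Rightarrow> 'a \<Rightarrow> 'a \<Rightarrow> 'a set set" where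
  "reduced_comps V E z x = (\<lambda>D. D - {x}) ` local_comps V E z"

context sym_adj
begin

lemma reduced_comps_cases:
  assumes C: "C \<in> local_comps V E z" and x: "x \<in> C" and D: "D \<in> reduced_comps V E z x"
  shows "D = C - {x} \<or> D \<in> local_comps V E z \<and> D \<noteq> C"
proof -
  obtain D0 where D0: "D0 \<in> local_comps V E z" "D = D0 - {x}"
    using D unfolding reduced_comps_def by blast
  show ?thesis
  proof (cases "D0 = C")
    case False
    then have "x \<notin> D0"
      using comp_disjoint[of "V - {z}" D0 C x] D0(1) C x unfolding local_comps_def by blast
    then have "D = D0" using D0(2) by auto
    then show ?thesis using False D0(1) by blast
  qed (use D0 in blast)
qed

lemma reduced_comps_subset:
  assumes "D \<in> reduced_comps V E z x"
  shows "D \<subseteq> V - {x} - {z}"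
proof -
  obtain D0 where "D0 \<in> components (V - {z}) E" "D = D0 - {x}"
    using assms unfolding reduced_comps_def local_comps_def by blast
  then show ?thesis using comp_subset by blast
qed

lemma card_reduced_comps: "card (reduced_comps V E z x) = card (local_comps V E z)"
  unfolding reduced_comps_def local_comps_def
  using comp_delete_inj[of "V - {z}" x] by (simp add: card_image)

lemma reduced_comps_separated:
  assumes "D1 \<in> reduced_comps V E z x" "D2 \<in> reduced_comps V E z x" "D1 \<noteq> D2"
    and "v \<in> D1" "w \<in> D2"
  shows "v \<noteq> w \<and> \<not> E v w"
proof -
  obtain O1 O2 where O: "O1 \<in> components (V - {z}) E" "O2 \<in> components (V - {z}) E"
      "D1 = O1 - {x}" "D2 = O2 - {x}"
    using assms(1,2) unfolding reduced_comps_def local_comps_def by blast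
  then have "O1 \<noteq> O2" "v \<in> O1" "w \<in> O2" using assms(3-5) by auto
  moreover have S: "V - {z} \<subseteq> V" by blast
  ultimately show ?thesis using comp_disjoint[OF S] comp_no_edge[OF S] O(1,2) by metis
qed

end

text \<open>The reduced components are as many as the local components; in an
  optimal representation of G - x all but two are nested in I z, and the nested ones
  avoid C - {x}, hence are non-exterior local components.\<close>
lemma wt_at_le_impropriety_delete:
  assumes sg: "simple_graph V E" and ig: "interval_graph V E" and conn: "connected_graph V E"
    and z: "z \<in> V" and C: "C \<in> local_comps V E z" and x: "x \<in> C"
    and Cx_conn: "\<exists>r\<in>C - {x}. \<forall>w\<in>C - {x}. reach (C - {x}) E r w"
    and Cx_nbr: "\<exists>w\<in>C - {x}. E z w" and Cx_non_nbr: "\<exists>w\<in>C - {x}. \<not> E z w"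
  shows "wt_at V E z \<le> impropriety (V - {x}) E"
proof -
  interpret sym_adj V E using sg by (rule simple_graph_sym_adj)
  define F where "F = reduced_comps V E z x"
  have finV: "finite V" using sg unfolding simple_graph_def by simp
  have finLC: "finite (local_comps V E z)" using finite_local_comps[OF finV] .
  have xz: "x \<noteq> z" using comp_subset C x unfolding local_comps_def by blast
  obtain I0 where "is_interval_rep V E I0" using ig unfolding interval_graph_def by blast
  then obtain I where I: "is_interval_rep (V - {x}) E I"
      "imp_rep (V - {x}) I = impropriety (V - {x}) E"
    using impropriety_attained by blast
  obtain Fin where Fin: "Fin \<subseteq> F" "card F \<le> card Fin + 2"
      "\<And>D w. D \<in> Fin \<Longrightarrow> w \<in> D \<Longrightarrow> E z w" "sum card Fin \<le> imp_at (V - {x}) I z"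
  proof (rule nested_members_bound[OF I(1)])
    show "finite (V - {x})" "z \<in> V - {x}" "finite F"
      using finV z xz finLC unfolding F_def reduced_comps_def by auto
    show "D \<subseteq> V - {x} - {z}" if "D \<in> F" for D
      by (rule reduced_comps_subset[OF that[unfolded F_def]])
    show "\<exists>r\<in>D. \<forall>w\<in>D. reach D E r w" if "D \<in> F" for D
    proof (cases "D = C - {x}")
      case False
      then have D: "D \<in> components (V - {z}) E"
        using reduced_comps_cases[OF C x that[unfolded F_def]] unfolding local_comps_def by blast
      then obtain d where "d \<in> D" using comp_nonempty by blast
      then show ?thesis using comp_connected[OF _ D] by blast
    qed (use Cx_conn in simp)
    show "\<exists>w\<in>D. E z w" if "D \<in> F" for D
      using reduced_comps_cases[OF C x that[unfolded F_def]]
    proof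
      assume "D \<in> local_comps V E z \<and> D \<noteq> C"
      then show ?thesis using comp_has_neighbor[OF conn z, of D] by blast
    qed (use Cx_nbr in simp)
    show "v \<noteq> w \<and> \<not> E v w"
      if "D1 \<in> F" "D2 \<in> F" "D1 \<noteq> D2" "v \<in> D1" "w \<in> D2" for D1 D2 v w
      by (rule reduced_comps_separated[OF that[unfolded F_def]])
  qed blast
  have "Fin \<subseteq> {D \<in> local_comps V E z. \<not> exterior E z D}"
  proof
    fix D assume D: "D \<in> Fin"
    have "D \<noteq> C - {x}" using Cx_non_nbr Fin(3)[OF D] by blast
    moreover have "D \<in> reduced_comps V E z x" using Fin(1) D unfolding F_def by blast
    ultimately have "D \<in> local_comps V E z" using reduced_comps_cases[OF C x] by blast
    then show "D \<in> {D \<in> local_comps V E z. \<not> exterior E z D}"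
      using Fin(3)[OF D] unfolding exterior_def by blast
  qed
  moreover have "card (local_comps V E z) \<le> card Fin + 2"
    using Fin(2) card_reduced_comps unfolding F_def by simp
  ultimately have "wt_at V E z \<le> sum card Fin"
    by (rule wt_at_le_sum_card[OF finLC])
  also have "\<dots> \<le> imp_rep (V - {x}) I"
    using Fin(4) imp_at_le_imp_rep[of "V - {x}" z I] finV z xz by simp
  finally show ?thesis using I(2) by simp
qed


theorem theorem3p1:
  fixes V :: "'a set" and E :: "'a \<Rightarrow> 'a \<Rightarrow> bool" and p :: nat and z :: 'a and C :: "'a set"
  assumes "simple_graph V E"
    and "interval_graph V E"
    and "connected_graph V E"
    and "balanced V E"
    and "p \<ge> 1"
    and "critical p V E"
    and "z \<in> V"
    and "\<forall>w\<in>V. wt_at V E w \<le> wt_at V E z"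
    and "C \<in> local_comps V E z"
    and "exterior E z C"
  shows "card C = 2"
proof (rule ccontr)
  assume not_two: "card C \<noteq> 2"
  interpret sym_adj V E using assms(1) by (rule simple_graph_sym_adj)
  have finV: "finite V" using assms(1) unfolding simple_graph_def by simp
  have C: "C \<in> components (V - {z}) E" using assms(9) unfolding local_comps_def .
  then have finC: "finite C" using finite_subset[OF comp_subset[OF C]] finV by blast
  obtain u where u: "u \<in> C" "\<not> E z u" using assms(10) unfolding exterior_def by blast
  obtain n where n: "n \<in> C" "E z n" using comp_has_neighbor[OF assms(3,7,9)] by blast
  have "u \<noteq> n" using u n by blast
  then have "2 \<le> card C" using card_mono[OF finC, of "{u, n}"] u n by simp
  then have three: "3 \<le> card C" using not_two by linarith
  have conn_C: "\<forall>v\<in>C. reach C E r v" if "r \<in> C" for r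
    using comp_connected[OF _ C that] by blast
  obtain x where x: "x \<in> C" "\<exists>r\<in>C - {x}. \<forall>v\<in>C - {x}. reach (C - {x}) E r v"
      "\<exists>v\<in>C - {x}. E z v" "\<exists>v\<in>C - {x}. \<not> E z v"
    using deletable_vertex_mixed[of C E u z n, OF finC conn_C u n three] by blast
  have "wt_at V E z \<le> impropriety (V - {x}) E"
    by (rule wt_at_le_impropriety_delete[OF assms(1-3,7,9) x])
  moreover have "wt V E = wt_at V E z"
    unfolding wt_def using assms(7,8) finV by (intro Max_eqI) auto
  then have "wt_at V E z = p" using assms(4,6) unfolding balanced_def critical_def by simp
  moreover have "V - {x} \<subset> V" using x(1) comp_subset[OF C] by auto
  then have "impropriety (V - {x}) E < p" using assms(6) unfolding critical_def by blast
  ultimately show False by simp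
qed

end
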